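(* Let $r\ge 1$ be a real parameter and let $G=(V,E)$ be a graph on $n\ge 2$ vertices with minimum degree at least $r\log n$. Then there exists $W\subseteq V$ with $|W|\ge 2$ such that every edge cut $(A,B)$ in $G[W]$ satisfies $$\Delta(A,B)\ge r\log \operatorname{imb}(A,B).$$
   Context: Graphs are simple and undirected; $\log$ is base $2$. For $W\subseteq V$, $G[W]$ is the subgraph of $G$ induced by $W$. An edge cut in $G[W]$ is a partition $(A,B)$ of $W$ into two nonempty sets. Its maximum degree is $$\Delta(A,B)=\max\Big\{\max_{a\in A}|\{\{a,b\}\in E: b\in B\}|,\ \max_{b\in B}|\{\{b,a\}\in E: a\in A\}|\Big\},$$ and its imbalance is $\operatorname{imb}(A,B)=\dfrac{|A|+|B|}{\min(|A|,|B|)}$. *)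

theory Defs
  imports Complex_Main
begin

definition simple_graph :: "'a set \<Rightarrow> 'a set set \<Rightarrow> bool" where
  "simple_graph V E \<longleftrightarrow> finite V \<and> (\<forall>e\<in>E. e \<subseteq> V \<and> card e = 2)"

definition degree :: "'a set set \<Rightarrow> 'a \<Rightarrow> nat" where
  "degree E v = card {e\<in>E. v \<in> e}"

definition deg_into :: "'a set set \<Rightarrow> 'a \<Rightarrow> 'a set \<Rightarrow> nat" where
  "deg_into E v S = card {e\<in>E. \<exists>b\<in>S. e = {v, b}}"

definition edge_cut :: "'a set \<Rightarrow> 'a set \<Rightarrow> 'a set \<Rightarrow> bool" where
  "edge_cut W A B \<longleftrightarrow> A \<noteq> {} \<and> B \<noteq> {} \<and> A \<inter> B = {} \<and> A \<union> B = W"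

definition cut_max_deg :: "'a set set \<Rightarrow> 'a set \<Rightarrow> 'a set \<Rightarrow> nat" where
  "cut_max_deg E A B = max (Max ((\<lambda>a. deg_into E a B) ` A)) (Max ((\<lambda>b. deg_into E b A) ` B))"

definition imb :: "'a set \<Rightarrow> 'a set \<Rightarrow> real" where
  "imb A B = (real (card A) + real (card B)) / real (min (card A) (card B))"

end

theory Submission
  imports Defs
begin

text \<open>If W has a bad cut (S, T) with S the smaller side, every vertex of S sends fewer than
  r log(|W|/|S|) edges to T, so it keeps more than r log |W| - r log(|W|/|S|) = r log |S|
  neighbours inside S. Hence G[S] satisfies the same minimum-degree condition as G[W] while
  being strictly smaller, and |S| \<ge> 2 because a single vertex has no neighbours in itself.
  Descending in this way must stop at a set all of whose cuts are good.\<close>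

definition log_min_degree :: "'a set set \<Rightarrow> real \<Rightarrow> 'a set \<Rightarrow> bool" where
  "log_min_degree E r W \<longleftrightarrow> (\<forall>v\<in>W. r * log 2 (card W) \<le> real (deg_into E v W))"

definition cuts_log_bounded :: "'a set set \<Rightarrow> real \<Rightarrow> 'a set \<Rightarrow> bool" where
  "cuts_log_bounded E r W \<longleftrightarrow>
     (\<forall>A B. edge_cut W A B \<longrightarrow> r * log 2 (imb A B) \<le> real (cut_max_deg E A B))"

lemma simple_graph_finite_edges: "simple_graph V E \<Longrightarrow> finite E"
  unfolding simple_graph_def by (meson Pow_iff finite_Pow_iff finite_subset subsetI)

lemma deg_into_self:
  assumes "simple_graph V E"
  shows "deg_into E v {v} = 0"
proof -
  have "{e\<in>E. \<exists>b\<in>{v}. e = {v, b}} = {}"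
    using assms unfolding simple_graph_def by force
  then show ?thesis unfolding deg_into_def by simp
qed

lemma deg_into_Un_disjoint:
  assumes "simple_graph V E" "S \<inter> T = {}"
  shows "deg_into E v (S \<union> T) = deg_into E v S + deg_into E v T"
proof -
  have "{e\<in>E. \<exists>b\<in>S \<union> T. e = {v, b}} = {e\<in>E. \<exists>b\<in>S. e = {v, b}} \<union> {e\<in>E. \<exists>b\<in>T. e = {v, b}}"
    by blast
  moreover have "{e\<in>E. \<exists>b\<in>S. e = {v, b}} \<inter> {e\<in>E. \<exists>b\<in>T. e = {v, b}} = {}"
    using assms(2) by (auto simp: doubleton_eq_iff)
  ultimately show ?thesis
    unfolding deg_into_def using simple_graph_finite_edges[OF assms(1)]
    by (simp add: card_Un_disjoint)
qed

lemma degree_eq_deg_into_vertices: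
  assumes "simple_graph V E" "v \<in> V"
  shows "degree E v = deg_into E v V"
proof -
  have "{e\<in>E. v \<in> e} = {e\<in>E. \<exists>b\<in>V. e = {v, b}}"
  proof safe
    fix e assume "e \<in> E" "v \<in> e"
    then have "e \<subseteq> V" "card e = 2" using assms(1) unfolding simple_graph_def by auto
    then obtain x y where "e = {x, y}" by (meson card_2_iff)
    then show "\<exists>b\<in>V. e = {v, b}" using \<open>v \<in> e\<close> \<open>e \<subseteq> V\<close> by auto
  qed
  then show ?thesis unfolding degree_def deg_into_def by simp
qed

lemma edge_cut_sym: "edge_cut W A B \<Longrightarrow> edge_cut W B A"
  unfolding edge_cut_def by auto

lemma cut_max_deg_sym: "cut_max_deg E B A = cut_max_deg E A B"
  unfolding cut_max_deg_def by simp

lemma imb_sym: "imb B A = imb A B"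
  unfolding imb_def by (simp add: min.commute add.commute)

lemma deg_into_le_cut_max_deg:
  "finite A \<Longrightarrow> a \<in> A \<Longrightarrow> deg_into E a B \<le> cut_max_deg E A B"
  unfolding cut_max_deg_def by (auto intro: le_max_iff_disj[THEN iffD2])

lemma log_imb_smaller_side:
  assumes "edge_cut W S T" "finite W" "card S \<le> card T"
  shows "log 2 (imb S T) = log 2 (card W) - log 2 (card S)"
proof -
  have "finite S" "finite T" "S \<noteq> {}" "S \<inter> T = {}" "W = S \<union> T"
    using assms(1,2) unfolding edge_cut_def by auto
  then have "card W = card S + card T" "card S > 0"
    by (auto simp: card_Un_disjoint)
  then show ?thesis
    unfolding imb_def using assms(3) by (simp add: log_divide)
qed

text \<open>No sign condition on r is needed here.\<close>
lemma bad_cut_smaller_side_log_min_degree: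
  assumes G: "simple_graph V E" and "finite W" and W: "log_min_degree E r W"
    and cut: "edge_cut W S T" "card S \<le> card T"
    and bad: "real (cut_max_deg E S T) < r * log 2 (imb S T)"
  shows "\<forall>v\<in>S. r * log 2 (card S) < real (deg_into E v S)"
proof
  fix v assume "v \<in> S"
  have "finite S" using cut(1) \<open>finite W\<close> unfolding edge_cut_def by auto
  have "real (deg_into E v T) < r * log 2 (card W) - r * log 2 (card S)"
    using deg_into_le_cut_max_deg[OF \<open>finite S\<close> \<open>v \<in> S\<close>, of E T] bad
      log_imb_smaller_side[OF cut(1) \<open>finite W\<close> cut(2)]
    by (simp add: right_diff_distrib)
  moreover have "deg_into E v W = deg_into E v S + deg_into E v T"
    using deg_into_Un_disjoint[OF G] cut(1) unfolding edge_cut_def by auto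
  moreover have "r * log 2 (card W) \<le> real (deg_into E v W)"
    using W \<open>v \<in> S\<close> cut(1) unfolding log_min_degree_def edge_cut_def by auto
  ultimately show "r * log 2 (card S) < real (deg_into E v S)" by linarith
qed

lemma log_min_degree_card_ge_2:
  assumes "simple_graph V E" "finite S" "S \<noteq> {}"
    and "\<forall>v\<in>S. r * log 2 (card S) < real (deg_into E v S)"
  shows "card S \<ge> 2"
proof (rule ccontr)
  assume "\<not> card S \<ge> 2"
  with assms(2,3) have "card S = 1"
    by (simp add: card_gt_0_iff Suc_le_eq not_le less_2_cases_iff)
  then obtain x where "S = {x}" by (rule card_1_singletonE)
  with assms(4) show False using deg_into_self[OF assms(1), of x] by simp
qed

lemma log_min_degree_imp_cuts_log_bounded_subset:
  assumes G: "simple_graph V E"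
  shows "W \<subseteq> V \<Longrightarrow> card W \<ge> 2 \<Longrightarrow> log_min_degree E r W \<Longrightarrow>
    \<exists>W'\<subseteq>W. card W' \<ge> 2 \<and> cuts_log_bounded E r W'"
proof (induction "card W" arbitrary: W rule: less_induct)
  case less
  have "finite W"
    using less.prems(1) G unfolding simple_graph_def by (auto intro: finite_subset)
  show ?case
  proof (cases "cuts_log_bounded E r W")
    case True
    with less.prems(2) show ?thesis by blast
  next
    case False
    then obtain A B where "edge_cut W A B" "real (cut_max_deg E A B) < r * log 2 (imb A B)"
      unfolding cuts_log_bounded_def by force
    then obtain S T where cut: "edge_cut W S T" "card S \<le> card T"
      and bad: "real (cut_max_deg E S T) < r * log 2 (imb S T)"
      using edge_cut_sym cut_max_deg_sym imb_sym nat_le_linear by metis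
    have S: "S \<subseteq> W" "S \<noteq> {}" "finite S" "card S < card W"
      using cut(1) \<open>finite W\<close> unfolding edge_cut_def
      by (auto intro!: psubset_card_mono)
    have dense: "\<forall>v\<in>S. r * log 2 (card S) < real (deg_into E v S)"
      using bad_cut_smaller_side_log_min_degree[OF G \<open>finite W\<close> less.prems(3) cut bad] .
    then have "log_min_degree E r S"
      unfolding log_min_degree_def by (simp add: less_imp_le)
    moreover have "card S \<ge> 2"
      using log_min_degree_card_ge_2[OF G S(3,2) dense] .
    ultimately obtain W' where "W' \<subseteq> S" "card W' \<ge> 2" "cuts_log_bounded E r W'"
      using less.hyps[OF S(4)] S(1) less.prems(1) by blast
    with S(1) show ?thesis by blast
  qed
qed

theorem lemma2p2:
  fixes V :: "'a set" and E :: "'a set set" and r :: real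
  assumes "simple_graph V E"
    and "r \<ge> 1"
    and "card V \<ge> 2"
    and "\<forall>v\<in>V. real (degree E v) \<ge> r * log 2 (card V)"
  shows "\<exists>W\<subseteq>V. card W \<ge> 2 \<and>
           (\<forall>A B. edge_cut W A B \<longrightarrow>
              real (cut_max_deg E A B) \<ge> r * log 2 (imb A B))"
proof -
  have "log_min_degree E r V"
    using assms(4) degree_eq_deg_into_vertices[OF assms(1)]
    unfolding log_min_degree_def by simp
  then show ?thesis
    using log_min_degree_imp_cuts_log_bounded_subset[OF assms(1) order_refl assms(3)]
    unfolding cuts_log_bounded_def by blast
qed

end
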